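(* For any representations $R_1,R_2,R_3$: (1) $d_{\mathrm{repr}}(R_1,R_1)=0$; (2) $d_{\mathrm{repr}}(R_1,R_2)=d_{\mathrm{repr}}(R_2,R_1)$; (3) $d_{\mathrm{repr}}(R_1,R_3)\le d_{\mathrm{repr}}(R_1,R_2)+d_{\mathrm{repr}}(R_2,R_3)$.
   Context: A representation is a chain-structured causal model $U\to v_1\to\cdots\to v_L$ whose hidden variables are real-vector-valued functions of the input (on a task $S$). For representations $R_i$, let $H_i$ be the concatenation (direct sum) of the solutions of all hidden variables of $R_i$, regarded as a function on $S$. Then $d_{\mathrm{repr}}(R_1,R_2)=\max\big(\inf_{\|A\|_{\mathrm{op}}\le1}\|AH_1-H_2\|,\ \inf_{\|B\|_{\mathrm{op}}\le1}\|H_1-BH_2\|\big)$, where the infima are over linear operators of operator norm at most $1$ and $\|\cdot\|$ is a direct-sum norm. *)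

theory Defs
  imports Complex_Main "Jordan_Normal_Form.Matrix"
begin

text \<open>A representation: a chain-structured causal model U -> v_1 -> ... -> v_L.  Hidden variable v_l is real-vector valued
  of dimension (rep_dims R ! (l-1)).  The mechanism of v_1 is a function of the input,
  the mechanism of v_(l+1) is a function of v_l.\<close>

datatype 'x representation =
  Repr (rep_dims: "nat list") (rep_first: "'x \<Rightarrow> real vec")
       (rep_mechs: "(real vec \<Rightarrow> real vec) list")

fun chain_sols :: "('x \<Rightarrow> real vec) \<Rightarrow> (real vec \<Rightarrow> real vec) list \<Rightarrow> ('x \<Rightarrow> real vec) list" where
  "chain_sols f [] = [f]"
| "chain_sols f (g # gs) = f # chain_sols (g \<circ> f) gs"

definition hidden_sols :: "'x representation \<Rightarrow> ('x \<Rightarrow> real vec) list" where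
  "hidden_sols R = chain_sols (rep_first R) (rep_mechs R)"

definition wf_repr :: "'x set \<Rightarrow> 'x representation \<Rightarrow> bool" where
  "wf_repr S R \<longleftrightarrow> length (rep_dims R) = length (hidden_sols R) \<and>
     (\<forall>l < length (hidden_sols R). \<forall>s \<in> S. (hidden_sols R ! l) s \<in> carrier_vec (rep_dims R ! l))"

definition repr_dim :: "'x representation \<Rightarrow> nat" where
  "repr_dim R = sum_list (rep_dims R)"

definition concat_H :: "'x representation \<Rightarrow> 'x \<Rightarrow> real vec" where
  "concat_H R s = foldr (\<lambda>h acc. h s @\<^sub>v acc) (hidden_sols R) (vec 0 (\<lambda>_. 0))"

definition vnorm :: "real vec \<Rightarrow> real" where
  "vnorm v = sqrt (\<Sum>i<dim_vec v. (v $ i)\<^sup>2)"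

definition op_norm :: "real mat \<Rightarrow> real" where
  "op_norm A = (SUP v \<in> {v \<in> carrier_vec (dim_col A). vnorm v \<le> 1}. vnorm (A *\<^sub>v v))"

definition fnorm :: "'x set \<Rightarrow> ('x \<Rightarrow> real vec) \<Rightarrow> real" where
  "fnorm S F = sqrt (\<Sum>s\<in>S. (vnorm (F s))\<^sup>2)"

definition d_repr :: "'x set \<Rightarrow> 'x representation \<Rightarrow> 'x representation \<Rightarrow> real" where
  "d_repr S R1 R2 = max
     (INF A \<in> {A \<in> carrier_mat (repr_dim R2) (repr_dim R1). op_norm A \<le> 1}.
        fnorm S (\<lambda>s. A *\<^sub>v concat_H R1 s - concat_H R2 s))
     (INF B \<in> {B \<in> carrier_mat (repr_dim R1) (repr_dim R2). op_norm B \<le> 1}.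
        fnorm S (\<lambda>s. concat_H R1 s - B *\<^sub>v concat_H R2 s))"

end

theory Submission
  imports Defs "HOL-Analysis.L2_Norm"
begin

text \<open>Contractions contain the identity, which makes \<open>d_repr S R R\<close> vanish, and are closed
  under products: if \<open>A\<^sub>1\<close> aligns \<open>H\<^sub>1\<close> with \<open>H\<^sub>2\<close> and \<open>A\<^sub>2\<close> aligns \<open>H\<^sub>2\<close> with \<open>H\<^sub>3\<close>, then
  \<open>A\<^sub>2 A\<^sub>1 H\<^sub>1 - H\<^sub>3 = A\<^sub>2 (A\<^sub>1 H\<^sub>1 - H\<^sub>2) + (A\<^sub>2 H\<^sub>2 - H\<^sub>3)\<close>, and since \<open>A\<^sub>2\<close> does not increase
  norms, each one-sided term satisfies the triangle inequality. Symmetry is built into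
  the definition because \<open>\<parallel>H\<^sub>1 - B H\<^sub>2\<parallel> = \<parallel>B H\<^sub>2 - H\<^sub>1\<parallel>\<close>, and taking the maximum of
  the two directions preserves the triangle inequality.\<close>

lemma vnorm_L2_set: "vnorm v = L2_set (\<lambda>i. v $ i) {..<dim_vec v}"
  unfolding vnorm_def L2_set_def by simp

lemma vnorm_nonneg: "0 \<le> vnorm v"
  by (simp add: vnorm_def sum_nonneg)

lemma vnorm_zero_vec [simp]: "vnorm (0\<^sub>v n) = 0"
  by (simp add: vnorm_def)

lemma vnorm_eq_0_iff: "vnorm v = 0 \<longleftrightarrow> v = 0\<^sub>v (dim_vec v)"
proof -
  have "vnorm v = 0 \<longleftrightarrow> (\<forall>i<dim_vec v. v $ i = 0)"
    unfolding vnorm_L2_set by (subst L2_set_eq_0_iff) auto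
  thus ?thesis by (auto simp: vec_eq_iff)
qed

lemma abs_index_le_vnorm: "i < dim_vec v \<Longrightarrow> \<bar>v $ i\<bar> \<le> vnorm v"
  unfolding vnorm_L2_set using member_le_L2_set[of "{..<dim_vec v}" i "\<lambda>i. \<bar>v $ i\<bar>"]
  by (simp add: L2_set_def)

lemma vnorm_le_sum_abs: "vnorm v \<le> (\<Sum>i<dim_vec v. \<bar>v $ i\<bar>)"
  unfolding vnorm_L2_set by (rule L2_set_le_sum_abs)

lemma vnorm_add_le:
  "v \<in> carrier_vec n \<Longrightarrow> w \<in> carrier_vec n \<Longrightarrow> vnorm (v + w) \<le> vnorm v + vnorm w"
  unfolding vnorm_L2_set using L2_set_triangle_ineq[of "\<lambda>i. v $ i" "\<lambda>i. w $ i" "{..<n}"]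
  by (simp add: L2_set_def)

lemma vnorm_smult: "vnorm (k \<cdot>\<^sub>v v) = \<bar>k\<bar> * vnorm v"
proof -
  have "vnorm (k \<cdot>\<^sub>v v) = sqrt (k\<^sup>2 * (\<Sum>i<dim_vec v. (v $ i)\<^sup>2))"
    unfolding vnorm_def by (simp add: power_mult_distrib sum_distrib_left)
  thus ?thesis by (simp add: vnorm_def real_sqrt_mult)
qed

lemma vnorm_minus_commute:
  "v \<in> carrier_vec n \<Longrightarrow> w \<in> carrier_vec n \<Longrightarrow> vnorm (v - w) = vnorm (w - v)"
  unfolding vnorm_def by (simp add: power2_commute)

lemma op_norm_bdd_above:
  assumes A: "A \<in> carrier_mat n m"
  shows "bdd_above ((\<lambda>v. vnorm (A *\<^sub>v v)) ` {v \<in> carrier_vec (dim_col A). vnorm v \<le> 1})"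
proof (rule bdd_aboveI2)
  fix v assume v: "v \<in> {v \<in> carrier_vec (dim_col A). vnorm v \<le> 1}"
  have "\<bar>(A *\<^sub>v v) $ i\<bar> \<le> (\<Sum>j<m. \<bar>A $$ (i,j)\<bar>)" if i: "i < n" for i
  proof -
    have "\<bar>(A *\<^sub>v v) $ i\<bar> = \<bar>\<Sum>j<m. A $$ (i,j) * v $ j\<bar>"
      using A v i by (auto simp: scalar_prod_def row_def lessThan_atLeast0)
    also have "\<dots> \<le> (\<Sum>j<m. \<bar>A $$ (i,j)\<bar> * \<bar>v $ j\<bar>)"
      by (rule order_trans[OF sum_abs]) (simp add: abs_mult)
    also have "\<dots> \<le> (\<Sum>j<m. \<bar>A $$ (i,j)\<bar>)"
      using A v by (intro sum_mono mult_left_le) (auto intro: order_trans[OF abs_index_le_vnorm])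
    finally show ?thesis .
  qed
  hence "(\<Sum>i<n. \<bar>(A *\<^sub>v v) $ i\<bar>) \<le> (\<Sum>i<n. \<Sum>j<m. \<bar>A $$ (i,j)\<bar>)"
    by (intro sum_mono) simp
  thus "vnorm (A *\<^sub>v v) \<le> (\<Sum>i<n. \<Sum>j<m. \<bar>A $$ (i,j)\<bar>)"
    using vnorm_le_sum_abs[of "A *\<^sub>v v"] A by simp
qed

lemma op_norm_leI:
  assumes "\<And>v. v \<in> carrier_vec (dim_col A) \<Longrightarrow> vnorm v \<le> 1 \<Longrightarrow> vnorm (A *\<^sub>v v) \<le> c"
  shows "op_norm A \<le> c"
  unfolding op_norm_def
proof (rule cSUP_least)
  have "0\<^sub>v (dim_col A) \<in> {v \<in> carrier_vec (dim_col A). vnorm v \<le> 1}" by simp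
  thus "{v \<in> carrier_vec (dim_col A). vnorm v \<le> 1} \<noteq> {}" by blast
qed (use assms in auto)

lemma vnorm_mult_mat_vec_le:
  assumes A: "A \<in> carrier_mat n m" and v: "v \<in> carrier_vec m"
  shows "vnorm (A *\<^sub>v v) \<le> op_norm A * vnorm v"
proof (cases "vnorm v = 0")
  case True
  hence "A *\<^sub>v v = 0\<^sub>v n" using A v vnorm_eq_0_iff by auto
  thus ?thesis using True by simp
next
  case False
  hence pos: "vnorm v > 0" using vnorm_nonneg[of v] by linarith
  define u where "u = (1 / vnorm v) \<cdot>\<^sub>v v"
  have u: "u \<in> carrier_vec (dim_col A)" "vnorm u \<le> 1"
    using A v pos by (auto simp: u_def vnorm_smult)
  have "vnorm (A *\<^sub>v u) \<le> op_norm A"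
    unfolding op_norm_def by (rule cSUP_upper[OF _ op_norm_bdd_above[OF A]]) (use u in auto)
  moreover have "A *\<^sub>v u = (1 / vnorm v) \<cdot>\<^sub>v (A *\<^sub>v v)"
    unfolding u_def using mult_mat_vec[OF A v] by simp
  ultimately have "vnorm (A *\<^sub>v v) / vnorm v \<le> op_norm A"
    using pos by (simp add: vnorm_smult)
  thus ?thesis using pos by (simp add: divide_le_eq mult.commute)
qed

definition contractions :: "nat \<Rightarrow> nat \<Rightarrow> real mat set" where
  "contractions n m = {A \<in> carrier_mat n m. op_norm A \<le> 1}"

lemma vnorm_contraction_le:
  assumes "A \<in> contractions n m" and v: "v \<in> carrier_vec m"
  shows "vnorm (A *\<^sub>v v) \<le> vnorm v"
proof -
  have "vnorm (A *\<^sub>v v) \<le> op_norm A * vnorm v"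
    using assms by (intro vnorm_mult_mat_vec_le) (auto simp: contractions_def)
  also have "\<dots> \<le> vnorm v"
    using assms mult_right_mono[OF _ vnorm_nonneg, of "op_norm A" 1 v]
    by (simp add: contractions_def)
  finally show ?thesis .
qed

lemma zero_mat_in_contractions: "0\<^sub>m n m \<in> contractions n m"
proof -
  have "(0\<^sub>m n m :: real mat) *\<^sub>v v = 0\<^sub>v n" if "v \<in> carrier_vec m" for v
    using that by auto
  thus ?thesis unfolding contractions_def by (auto intro: op_norm_leI)
qed

lemma one_mat_in_contractions: "1\<^sub>m n \<in> contractions n n"
  unfolding contractions_def by (auto intro: op_norm_leI)

lemma mult_mat_in_contractions:
  assumes A: "A \<in> contractions n k" and B: "B \<in> contractions k m"
  shows "A * B \<in> contractions n m"
proof -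
  have AB: "A * B \<in> carrier_mat n m" using A B by (auto simp: contractions_def)
  have "vnorm ((A * B) *\<^sub>v v) \<le> 1" if "v \<in> carrier_vec m" "vnorm v \<le> 1" for v
  proof -
    have "vnorm ((A * B) *\<^sub>v v) = vnorm (A *\<^sub>v (B *\<^sub>v v))"
      using A B that by (auto simp: contractions_def)
    also have "\<dots> \<le> vnorm (B *\<^sub>v v)"
      using A B that by (intro vnorm_contraction_le) (auto simp: contractions_def)
    also have "\<dots> \<le> vnorm v" by (rule vnorm_contraction_le[OF B that(1)])
    finally show ?thesis using that by simp
  qed
  thus ?thesis using AB unfolding contractions_def by (auto intro: op_norm_leI)
qed

lemma vnorm_compose_residual_le:
  assumes A1: "A1 \<in> carrier_mat n2 n1" and A2: "A2 \<in> contractions n3 n2"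
    and x: "x \<in> carrier_vec n1" and y: "y \<in> carrier_vec n2" and z: "z \<in> carrier_vec n3"
  shows "vnorm ((A2 * A1) *\<^sub>v x - z) \<le> vnorm (A1 *\<^sub>v x - y) + vnorm (A2 *\<^sub>v y - z)"
proof -
  have A2c: "A2 \<in> carrier_mat n3 n2" using A2 by (simp add: contractions_def)
  have "(A2 * A1) *\<^sub>v x - z = A2 *\<^sub>v (A1 *\<^sub>v x - y) + (A2 *\<^sub>v y - z)"
    using A1 A2c x y z by (auto simp: assoc_mult_mat_vec mult_minus_distrib_mat_vec)
  also have "vnorm \<dots> \<le> vnorm (A2 *\<^sub>v (A1 *\<^sub>v x - y)) + vnorm (A2 *\<^sub>v y - z)"
    using A1 A2c x y z by (intro vnorm_add_le[where n = n3]) auto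
  also have "vnorm (A2 *\<^sub>v (A1 *\<^sub>v x - y)) \<le> vnorm (A1 *\<^sub>v x - y)"
    using A1 A2 x y by (intro vnorm_contraction_le) auto
  finally show ?thesis by simp
qed

lemma fnorm_L2_set: "fnorm S F = L2_set (\<lambda>s. vnorm (F s)) S"
  unfolding fnorm_def L2_set_def by simp

lemma fnorm_nonneg: "0 \<le> fnorm S F"
  unfolding fnorm_L2_set by simp

lemma fnorm_le_add:
  assumes "\<And>s. s \<in> S \<Longrightarrow> vnorm (F s) \<le> vnorm (G s) + vnorm (K s)"
  shows "fnorm S F \<le> fnorm S G + fnorm S K"
proof -
  have "fnorm S F \<le> L2_set (\<lambda>s. vnorm (G s) + vnorm (K s)) S"
    unfolding fnorm_L2_set using assms by (intro L2_set_mono) (auto simp: vnorm_nonneg)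
  also have "\<dots> \<le> fnorm S G + fnorm S K"
    unfolding fnorm_L2_set by (rule L2_set_triangle_ineq)
  finally show ?thesis .
qed

lemma le_INF_add_INF:
  fixes f g :: "'a \<Rightarrow> real"
  assumes "X \<noteq> {}" "Y \<noteq> {}" and "\<And>x y. x \<in> X \<Longrightarrow> y \<in> Y \<Longrightarrow> a \<le> f x + g y"
  shows "a \<le> (INF x\<in>X. f x) + (INF y\<in>Y. g y)"
proof -
  have "a - g y \<le> (INF x\<in>X. f x)" if "y \<in> Y" for y
    using assms that by (intro cINF_greatest) (auto simp: algebra_simps)
  hence "a - (INF x\<in>X. f x) \<le> (INF y\<in>Y. g y)"
    using assms(2) by (intro cINF_greatest) (auto simp: algebra_simps)
  thus ?thesis by simp
qed

definition align_dist ::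
    "'x set \<Rightarrow> ('x \<Rightarrow> real vec) \<Rightarrow> ('x \<Rightarrow> real vec) \<Rightarrow> nat \<Rightarrow> nat \<Rightarrow> real" where
  "align_dist S H1 H2 n1 n2 =
     (INF A \<in> contractions n2 n1. fnorm S (\<lambda>s. A *\<^sub>v H1 s - H2 s))"

lemma align_dist_le:
  "A \<in> contractions n2 n1 \<Longrightarrow> align_dist S H1 H2 n1 n2 \<le> fnorm S (\<lambda>s. A *\<^sub>v H1 s - H2 s)"
  unfolding align_dist_def by (rule cINF_lower) (auto intro: bdd_belowI2 fnorm_nonneg)

lemma align_dist_nonneg: "0 \<le> align_dist S H1 H2 n1 n2"
  unfolding align_dist_def
  using zero_mat_in_contractions by (intro cINF_greatest fnorm_nonneg) blast

lemma align_dist_self: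
  assumes "\<And>s. s \<in> S \<Longrightarrow> H s \<in> carrier_vec n"
  shows "align_dist S H H n n = 0"
proof -
  have "align_dist S H H n n \<le> fnorm S (\<lambda>s. 1\<^sub>m n *\<^sub>v H s - H s)"
    by (rule align_dist_le[OF one_mat_in_contractions])
  also have "\<dots> = 0"
    using assms by (auto simp: fnorm_def minus_cancel_vec[OF assms] intro!: sum.neutral)
  finally show ?thesis using align_dist_nonneg[of S H H n n] by simp
qed

lemma align_dist_triangle:
  assumes H1: "\<And>s. s \<in> S \<Longrightarrow> H1 s \<in> carrier_vec n1"
    and H2: "\<And>s. s \<in> S \<Longrightarrow> H2 s \<in> carrier_vec n2"
    and H3: "\<And>s. s \<in> S \<Longrightarrow> H3 s \<in> carrier_vec n3"
  shows "align_dist S H1 H3 n1 n3 \<le> align_dist S H1 H2 n1 n2 + align_dist S H2 H3 n2 n3"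
  unfolding align_dist_def[of S H1 H2] align_dist_def[of S H2 H3]
proof (rule le_INF_add_INF)
  show "contractions n2 n1 \<noteq> {}" "contractions n3 n2 \<noteq> {}"
    using zero_mat_in_contractions by blast+
  fix A1 A2 assume A1: "A1 \<in> contractions n2 n1" and A2: "A2 \<in> contractions n3 n2"
  have "align_dist S H1 H3 n1 n3 \<le> fnorm S (\<lambda>s. (A2 * A1) *\<^sub>v H1 s - H3 s)"
    using A1 A2 by (intro align_dist_le mult_mat_in_contractions)
  also have "\<dots> \<le> fnorm S (\<lambda>s. A1 *\<^sub>v H1 s - H2 s) + fnorm S (\<lambda>s. A2 *\<^sub>v H2 s - H3 s)"
    using A1 A2 H1 H2 H3
    by (intro fnorm_le_add vnorm_compose_residual_le) (auto simp: contractions_def)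
  finally show "align_dist S H1 H3 n1 n3
      \<le> fnorm S (\<lambda>s. A1 *\<^sub>v H1 s - H2 s) + fnorm S (\<lambda>s. A2 *\<^sub>v H2 s - H3 s)" .
qed

lemma foldr_append_vec_carrier:
  "length ds = length hs \<Longrightarrow> (\<forall>l<length hs. (hs ! l) s \<in> carrier_vec (ds ! l)) \<Longrightarrow>
   foldr (\<lambda>h acc. h s @\<^sub>v acc) hs (vec 0 f) \<in> carrier_vec (sum_list ds)"
proof (induction hs arbitrary: ds)
  case (Cons h hs)
  then obtain d ds' where ds: "ds = d # ds'" by (cases ds) auto
  have "h s \<in> carrier_vec d" using Cons.prems ds by force
  moreover have "foldr (\<lambda>h acc. h s @\<^sub>v acc) hs (vec 0 f) \<in> carrier_vec (sum_list ds')"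
    using Cons.prems ds by (intro Cons.IH) auto
  ultimately show ?case using ds by simp
qed simp

lemma concat_H_carrier:
  "wf_repr S R \<Longrightarrow> s \<in> S \<Longrightarrow> concat_H R s \<in> carrier_vec (repr_dim R)"
  unfolding concat_H_def repr_dim_def wf_repr_def by (intro foldr_append_vec_carrier) auto

lemma d_repr_eq_max_align_dist:
  assumes R1: "wf_repr S R1" and R2: "wf_repr S R2"
  shows "d_repr S R1 R2 =
    max (align_dist S (concat_H R1) (concat_H R2) (repr_dim R1) (repr_dim R2))
        (align_dist S (concat_H R2) (concat_H R1) (repr_dim R2) (repr_dim R1))"
proof -
  have "fnorm S (\<lambda>s. concat_H R1 s - B *\<^sub>v concat_H R2 s)
      = fnorm S (\<lambda>s. B *\<^sub>v concat_H R2 s - concat_H R1 s)"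
    if "B \<in> contractions (repr_dim R1) (repr_dim R2)" for B
    unfolding fnorm_def using that concat_H_carrier[OF R1] concat_H_carrier[OF R2]
    by (intro arg_cong[where f = sqrt] sum.cong refl arg_cong[where f = power2]
        vnorm_minus_commute[where n = "repr_dim R1"]) (auto simp: contractions_def)
  thus ?thesis
    unfolding d_repr_def align_dist_def contractions_def[symmetric]
    by (simp cong: INF_cong)
qed

theorem lemmaG2:
  fixes S :: "'x set" and R1 R2 R3 :: "'x representation"
  assumes "finite S"
    and "wf_repr S R1" and "wf_repr S R2" and "wf_repr S R3"
  shows "d_repr S R1 R1 = 0 \<and> d_repr S R1 R2 = d_repr S R2 R1 \<and>
         d_repr S R1 R3 \<le> d_repr S R1 R2 + d_repr S R2 R3"
proof -
  note H1 = concat_H_carrier[OF assms(2)] and H2 = concat_H_carrier[OF assms(3)]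
    and H3 = concat_H_carrier[OF assms(4)]
  let ?a = "\<lambda>R R'. align_dist S (concat_H R) (concat_H R') (repr_dim R) (repr_dim R')"
  have "?a R1 R3 \<le> ?a R1 R2 + ?a R2 R3" by (rule align_dist_triangle[OF H1 H2 H3])
  moreover have "?a R3 R1 \<le> ?a R3 R2 + ?a R2 R1" by (rule align_dist_triangle[OF H3 H2 H1])
  ultimately have "max (?a R1 R3) (?a R3 R1) \<le> max (?a R1 R2) (?a R2 R1) + max (?a R2 R3) (?a R3 R2)"
    by (simp add: max_def)
  moreover have "?a R1 R1 = 0" by (rule align_dist_self[OF H1])
  ultimately show ?thesis
    using assms(2-4) by (simp add: d_repr_eq_max_align_dist max.commute)
qed

end
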